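(* Let $A\subseteq\mathbb N_0\times\mathbb S$ be a Schnorr test for a computable forecasting system $\varphi$ such that $A_n$ is a partial cut for every $n\in\mathbb N_0$. Then there is a growth function $\varsigma:\mathbb N_0\to\mathbb N_0$ such that $$\sum_{n=0}^{\infty}2^{k}\,\overline P_\varphi\big([A_n^{\ge\varsigma(k)}]\big)\le2^{-k}\quad\text{for all }k\in\mathbb N_0.$$
   Context: $\mathbb N_0=\{0,1,\dots\}$; $\Omega=\{0,1\}^{\mathbb N}$; $\mathbb S$ finite binary strings, $|s|$ length, $\omega^n$ first $n$ entries; $[s]=\{\omega:\omega^{|s|}=s\}$, $[A]=\bigcup_{s\in A}[s]$; a partial cut is a prefix-free subset of $\mathbb S$. For $A\subseteq\mathbb N_0\times\mathbb S$: $A_n=\{s:(n,s)\in A\}$, $A_n^{<\ell}=\{s\in A_n:|s|<\ell\}$, $A_n^{\ge\ell}=\{s\in A_n:|s|\ge\ell\}$. $\mathcal I$: nonempty closed subintervals of $[0,1]$; $\overline E_I(f)=\max_{p\in I}[pf(1)+(1-p)f(0)]$. Forecasting system $\varphi:\mathbb S\to\mathcal I$, $\underline\varphi=\min\varphi$, $\overline\varphi=\max\varphi$; computable if $\underline\varphi,\overline\varphi$ are computable real maps (approximable by a recursive rational map to within $2^{-N}$). Supermartingale: $M:\mathbb S\to\mathbb R$ with $\overline E_{\varphi(s)}(M(s\,\cdot))\le M(s)$. $\overline P_\varphi(G)=\inf\{M(\square):M\text{ supermartingale for }\varphi,\ \liminf_nM(\omega^n)\ge\mathbb 1_G(\omega)\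 \forall\omega\}$. A Schnorr test for $\varphi$ is a recursive $A\subseteq\mathbb N_0\times\mathbb S$ with $\overline P_\varphi([A_n])\le2^{-n}$ for all $n$, and a recursive $e:\mathbb N_0^2\to\mathbb N_0$ with $\overline P_\varphi([A_n]\setminus[A_n^{<\ell}])\le2^{-N}$ for all $(N,n)$ and $\ell\ge e(N,n)$. A growth function is a recursive, non-decreasing, unbounded map $\mathbb N_0\to\mathbb N_0$. *)

theory Defs
  imports Complex_Main "HOL-Library.Extended_Real" "HOL-Library.Liminf_Limsup"
          "HOL-Library.Nat_Bijection" "HOL-Library.Indicator_Function"
begin

datatype recf = Zero | Succ | Proj nat | Comp recf "recf list" | Prec recf recf | Mn recf

inductive reval :: "recf \<Rightarrow> nat list \<Rightarrow> nat \<Rightarrow> bool" where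
  zero: "reval Zero xs 0"
| succ: "reval Succ (x # xs) (Suc x)"
| proj: "i < length xs \<Longrightarrow> reval (Proj i) xs (xs ! i)"
| comp: "list_all2 (\<lambda>g y. reval g xs y) gs ys \<Longrightarrow> reval f ys z \<Longrightarrow> reval (Comp f gs) xs z"
| prec0: "reval f xs y \<Longrightarrow> reval (Prec f g) (0 # xs) y"
| precS: "reval (Prec f g) (n # xs) y \<Longrightarrow> reval g (n # y # xs) z \<Longrightarrow> reval (Prec f g) (Suc n # xs) z"
| mn: "reval f (n # xs) 0 \<Longrightarrow> (\<forall>m<n. \<exists>y. reval f (m # xs) y \<and> y > 0) \<Longrightarrow> reval (Mn f) xs n"

definition str_code :: "bool list \<Rightarrow> nat" where
  "str_code s = list_encode (map (\<lambda>b. if b then 1 else 0) s)"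

definition recursive1 :: "(nat \<Rightarrow> nat) \<Rightarrow> bool" where
  "recursive1 f \<longleftrightarrow> (\<exists>p. \<forall>n. reval p [n] (f n))"

definition recursive2 :: "(nat \<Rightarrow> nat \<Rightarrow> nat) \<Rightarrow> bool" where
  "recursive2 f \<longleftrightarrow> (\<exists>p. \<forall>m n. reval p [m, n] (f m n))"

definition recursive_set :: "(nat \<times> bool list) set \<Rightarrow> bool" where
  "recursive_set A \<longleftrightarrow> (\<exists>p. \<forall>n s. reval p [n, str_code s] (if (n, s) \<in> A then 1 else 0))"

definition computable_real_map :: "(bool list \<Rightarrow> real) \<Rightarrow> bool" where
  "computable_real_map f \<longleftrightarrow>
     (\<exists>pa pb pc. \<forall>s N. \<exists>a b c. reval pa [str_code s, N] a \<and> reval pb [str_code s, N] b \<and>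
        reval pc [str_code s, N] c \<and>
        \<bar>(real a - real b) / (real c + 1) - f s\<bar> \<le> (1/2) ^ N)"

definition growth_function :: "(nat \<Rightarrow> nat) \<Rightarrow> bool" where
  "growth_function g \<longleftrightarrow> recursive1 g \<and> mono g \<and> (\<forall>m. \<exists>n. m \<le> g n)"

definition pref :: "(nat \<Rightarrow> bool) \<Rightarrow> nat \<Rightarrow> bool list" where
  "pref \<omega> n = map \<omega> [0..<n]"

definition cyl :: "bool list \<Rightarrow> (nat \<Rightarrow> bool) set" where
  "cyl s = {\<omega>. pref \<omega> (length s) = s}"

definition cylset :: "bool list set \<Rightarrow> (nat \<Rightarrow> bool) set" where
  "cylset A = (\<Union>s\<in>A. cyl s)"

definition partial_cut :: "bool list set \<Rightarrow> bool" where
  "partial_cut C \<longleftrightarrow> (\<forall>s\<in>C. \<forall>t\<in>C. (\<exists>u. t = s @ u) \<longrightarrow> s = t)"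

definition sec :: "(nat \<times> bool list) set \<Rightarrow> nat \<Rightarrow> bool list set" where
  "sec A n = {s. (n, s) \<in> A}"

definition sec_lt :: "(nat \<times> bool list) set \<Rightarrow> nat \<Rightarrow> nat \<Rightarrow> bool list set" where
  "sec_lt A n l = {s \<in> sec A n. length s < l}"

definition sec_ge :: "(nat \<times> bool list) set \<Rightarrow> nat \<Rightarrow> nat \<Rightarrow> bool list set" where
  "sec_ge A n l = {s \<in> sec A n. length s \<ge> l}"

definition forecasting_system :: "(bool list \<Rightarrow> real set) \<Rightarrow> bool" where
  "forecasting_system \<phi> \<longleftrightarrow> (\<forall>s. \<exists>a b. 0 \<le> a \<and> a \<le> b \<and> b \<le> 1 \<and> \<phi> s = {a..b})"

definition computable_fs :: "(bool list \<Rightarrow> real set) \<Rightarrow> bool" where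
  "computable_fs \<phi> \<longleftrightarrow> computable_real_map (\<lambda>s. Inf (\<phi> s)) \<and> computable_real_map (\<lambda>s. Sup (\<phi> s))"

definition upper_exp :: "real set \<Rightarrow> (bool \<Rightarrow> real) \<Rightarrow> real" where
  "upper_exp I f = Sup ((\<lambda>p. p * f True + (1 - p) * f False) ` I)"

definition supermartingale :: "(bool list \<Rightarrow> real set) \<Rightarrow> (bool list \<Rightarrow> real) \<Rightarrow> bool" where
  "supermartingale \<phi> M \<longleftrightarrow> (\<forall>s. upper_exp (\<phi> s) (\<lambda>x. M (s @ [x])) \<le> M s)"

definition upper_prob :: "(bool list \<Rightarrow> real set) \<Rightarrow> (nat \<Rightarrow> bool) set \<Rightarrow> ereal" where
  "upper_prob \<phi> G = Inf {ereal (M []) | M. supermartingale \<phi> M \<and>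
       (\<forall>\<omega>. liminf (\<lambda>n. ereal (M (pref \<omega> n))) \<ge> ereal (indicator G \<omega>))}"

definition schnorr_test :: "(bool list \<Rightarrow> real set) \<Rightarrow> (nat \<times> bool list) set \<Rightarrow> bool" where
  "schnorr_test \<phi> A \<longleftrightarrow> recursive_set A \<and>
     (\<forall>n. upper_prob \<phi> (cylset (sec A n)) \<le> ereal ((1/2) ^ n)) \<and>
     (\<exists>e. recursive2 e \<and> (\<forall>N n l. l \<ge> e N n \<longrightarrow>
        upper_prob \<phi> (cylset (sec A n) - cylset (sec_lt A n l)) \<le> ereal ((1/2) ^ N)))"

end

theory Submission imports Defs begin

text \<open>Choose \<open>\<sigma> k\<close> so large that it dominates the Schnorr modulus \<open>e (n + 2k + 2) n\<close>
  at every level \<open>n < 2k + 2\<close>. Since \<open>A n\<close> is a partial cut, its strings of length at least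
  \<open>\<ell>\<close> cover only paths outside the cylinders of its strings shorter than \<open>\<ell>\<close>; hence the
  \<open>n\<close>-th term has upper probability at most \<open>2^-(n + 2k + 2)\<close> at these finitely many levels,
  and at most \<open>2^-n\<close> at all others. Each of the two parts of the series is then at most
  \<open>2^-(2k + 1)\<close>. Writing \<open>\<sigma>\<close> as a cumulative finite sum of values of the recursive
  function \<open>e\<close> makes it recursive and monotone.\<close>

lemma reval_ProjI: "i < length xs \<Longrightarrow> y = xs ! i \<Longrightarrow> reval (Proj i) xs y"
  using reval.proj by simp

lemma reval_Comp1: "reval g xs y \<Longrightarrow> reval f [y] z \<Longrightarrow> reval (Comp f [g]) xs z"
  by (rule reval.comp[where ys="[y]"]) auto

lemma reval_Comp2:
  "reval g1 xs y1 \<Longrightarrow> reval g2 xs y2 \<Longrightarrow> reval f [y1, y2] z \<Longrightarrow> reval (Comp f [g1, g2]) xs z"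
  by (rule reval.comp[where ys="[y1, y2]"]) auto

lemma reval_Comp_Succ: "reval g xs y \<Longrightarrow> reval (Comp Succ [g]) xs (Suc y)"
  by (rule reval_Comp1) (auto intro: reval.succ)

definition add_prog :: recf where
  "add_prog = Prec (Proj 0) (Comp Succ [Proj 1])"

lemma reval_add_prog: "reval add_prog [n, m] (n + m)"
proof (induction n)
  case 0
  show ?case unfolding add_prog_def by (auto intro!: reval.prec0 reval_ProjI)
next
  case (Suc n)
  have "reval (Comp Succ [Proj 1]) [n, n + m, m] (Suc (n + m))"
    by (intro reval_Comp_Succ reval_ProjI) auto
  with Suc show ?case unfolding add_prog_def by (auto intro: reval.precS)
qed

definition double_prog :: recf where
  "double_prog = Comp add_prog [Proj 0, Proj 0]"

lemma reval_double_prog: "reval double_prog [y] (2 * y)"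
  unfolding double_prog_def mult_2 by (rule reval_Comp2) (auto intro!: reval_ProjI reval_add_prog)

definition sum_prog :: "recf \<Rightarrow> recf" where
  "sum_prog h = Prec Zero (Comp add_prog [Proj 1, Comp h [Proj 0, Proj 2]])"

lemma reval_sum_prog:
  assumes "\<And>j x. reval h [j, x] (H j x)"
  shows "reval (sum_prog h) [k, x] (\<Sum>j<k. H j x)"
proof (induction k)
  case 0
  show ?case unfolding sum_prog_def by (auto intro!: reval.prec0 reval.zero)
next
  case (Suc k)
  let ?S = "\<Sum>j<k. H j x"
  have "reval (Comp h [Proj 0, Proj 2]) [k, ?S, x] (H k x)"
    by (rule reval_Comp2) (auto intro: reval_ProjI assms)
  then have "reval (Comp add_prog [Proj 1, Comp h [Proj 0, Proj 2]]) [k, ?S, x] (?S + H k x)"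
    by (intro reval_Comp2[OF _ _ reval_add_prog]) (auto intro: reval_ProjI)
  with Suc show ?case unfolding sum_prog_def by (auto intro: reval.precS)
qed

definition schnorr_growth :: "(nat \<Rightarrow> nat \<Rightarrow> nat) \<Rightarrow> nat \<Rightarrow> nat" where
  "schnorr_growth e k = k + (\<Sum>j<Suc k. \<Sum>n<2 * j + 2. e (n + 2 * j + 2) n)"

lemma recursive1_schnorr_growth:
  assumes "recursive2 e"
  shows "recursive1 (schnorr_growth e)"
proof -
  obtain p where p: "\<And>m n. reval p [m, n] (e m n)"
    using assms unfolding recursive2_def by blast
  have double: "reval g xs y \<Longrightarrow> reval (Comp double_prog [g]) xs (2 * y)" for g xs y
    by (rule reval_Comp1[OF _ reval_double_prog])
  define inner where
    "inner = Comp p [Comp Succ [Comp Succ [Comp add_prog [Proj 0, Comp double_prog [Proj 1]]]], Proj 0]"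
  have reval_inner: "reval inner [n, j] (e (n + 2 * j + 2) n)" for n j
  proof -
    have "reval (Comp Succ [Comp Succ [Comp add_prog [Proj 0, Comp double_prog [Proj 1]]]]) [n, j]
        (Suc (Suc (n + 2 * j)))"
      by (intro reval_Comp_Succ reval_Comp2[OF _ _ reval_add_prog] double reval_ProjI) auto
    then show ?thesis
      unfolding inner_def by (intro reval_Comp2[OF _ _ p]) (auto intro: reval_ProjI)
  qed
  define outer where
    "outer = Comp (sum_prog inner) [Comp Succ [Comp Succ [Comp double_prog [Proj 0]]], Proj 0]"
  have reval_outer: "reval outer [j, x] (\<Sum>n<2 * j + 2. e (n + 2 * j + 2) n)" for j x
  proof -
    have "reval (Comp Succ [Comp Succ [Comp double_prog [Proj 0]]]) [j, x] (Suc (Suc (2 * j)))"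
      by (intro reval_Comp_Succ double reval_ProjI) auto
    then show ?thesis
      unfolding outer_def by (intro reval_Comp2[OF _ _ reval_sum_prog[OF reval_inner]])
        (auto intro: reval_ProjI)
  qed
  have "reval (Comp add_prog [Proj 0, Comp (sum_prog outer) [Comp Succ [Proj 0], Zero]]) [k]
      (schnorr_growth e k)" for k
    unfolding schnorr_growth_def
    by (rule reval_Comp2) (auto intro!: reval_Comp1 reval_Comp2 reval_ProjI reval.succ reval.zero
        reval_add_prog reval_sum_prog[OF reval_outer])
  then show ?thesis unfolding recursive1_def by blast
qed

lemma growth_function_schnorr_growth:
  assumes "recursive2 e"
  shows "growth_function (schnorr_growth e)"
  unfolding growth_function_def
proof (intro conjI allI)
  show "recursive1 (schnorr_growth e)" using assms by (rule recursive1_schnorr_growth)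
  show "mono (schnorr_growth e)"
    unfolding mono_def schnorr_growth_def by (intro allI impI add_mono sum_mono2) auto
  show "\<exists>k. m \<le> schnorr_growth e k" for m
    by (rule exI[of _ m]) (simp add: schnorr_growth_def)
qed

lemma schnorr_modulus_le_growth:
  assumes "n < 2 * k + 2"
  shows "e (n + (2 * k + 2)) n \<le> schnorr_growth e k"
proof -
  have "e (n + (2 * k + 2)) n \<le> (\<Sum>n<2 * k + 2. e (n + 2 * k + 2) n)"
    using assms member_le_sum[of n "{..<2 * k + 2}" "\<lambda>n. e (n + 2 * k + 2) n"]
    by (simp add: add.assoc)
  also have "\<dots> \<le> (\<Sum>j<Suc k. \<Sum>n<2 * j + 2. e (n + 2 * j + 2) n)"
    by (rule member_le_sum[where f="\<lambda>j. \<Sum>n<2 * j + 2. e (n + 2 * j + 2) n"]) auto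
  finally show ?thesis unfolding schnorr_growth_def by simp
qed

lemma supermartingale_child_le:
  assumes "forecasting_system \<phi>" and "supermartingale \<phi> M"
  shows "\<exists>x. M (s @ [x]) \<le> M s"
proof (rule ccontr)
  assume "\<nexists>x. M (s @ [x]) \<le> M s"
  then have T: "M (s @ [True]) > M s" and F: "M (s @ [False]) > M s"
    by (meson not_le)+
  obtain a b where ab: "0 \<le> a" "a \<le> b" "b \<le> 1" "\<phi> s = {a..b}"
    using assms(1) unfolding forecasting_system_def by blast
  let ?f = "\<lambda>x. M (s @ [x])"
  have "bdd_above ((\<lambda>p. p * ?f True + (1 - p) * ?f False) ` \<phi> s)"
  proof (rule bdd_aboveI2)
    fix p assume "p \<in> \<phi> s"
    then have "0 \<le> p" "p \<le> 1" using ab by auto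
    then have "p * ?f True \<le> \<bar>?f True\<bar>" "(1 - p) * ?f False \<le> \<bar>?f False\<bar>"
      by (auto intro: order_trans[OF mult_left_mono mult_left_le_one_le] abs_ge_self)
    then show "p * ?f True + (1 - p) * ?f False \<le> \<bar>?f True\<bar> + \<bar>?f False\<bar>" by linarith
  qed
  moreover have "a \<in> \<phi> s" using ab by auto
  ultimately have "a * ?f True + (1 - a) * ?f False \<le> upper_exp (\<phi> s) ?f"
    unfolding upper_exp_def by (intro cSup_upper) auto
  also have "\<dots> \<le> M s" using assms(2) unfolding supermartingale_def by blast
  finally have "a * (?f True - M s) + (1 - a) * (?f False - M s) \<le> 0"
    by (simp add: algebra_simps)
  moreover have "a * (?f True - M s) + (1 - a) * (?f False - M s) > 0"
    using ab T F
    by (cases "a = 0") (simp, smt (verit) mult_nonneg_nonneg mult_pos_pos)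
  ultimately show False by linarith
qed

lemma pref_Suc: "pref \<omega> (Suc n) = pref \<omega> n @ [\<omega> n]"
  unfolding pref_def by simp

text \<open>Following at every node a child on which \<open>M\<close> does not increase yields a path along
  which \<open>M\<close> stays below \<open>M []\<close>; its liminf dominates an indicator, so \<open>M [] \<ge> 0\<close>.\<close>

lemma upper_prob_nonneg:
  assumes "forecasting_system \<phi>"
  shows "0 \<le> upper_prob \<phi> G"
  unfolding upper_prob_def
proof (rule Inf_greatest, clarify)
  fix M assume sm: "supermartingale \<phi> M"
    and lim: "\<forall>\<omega>. ereal (indicator G \<omega>) \<le> liminf (\<lambda>n. ereal (M (pref \<omega> n)))"
  define c where "c s = (SOME x. M (s @ [x]) \<le> M s)" for s
  have c: "M (s @ [c s]) \<le> M s" for s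
    unfolding c_def by (rule someI_ex) (rule supermartingale_child_le[OF assms sm])
  define path where "path = rec_nat [] (\<lambda>n s. s @ [c s])"
  define \<omega> where "\<omega> n = c (path n)" for n
  have pref_\<omega>: "pref \<omega> n = path n" for n
    by (induction n) (auto simp: pref_Suc path_def \<omega>_def pref_def)
  have "M (path n) \<le> M []" for n
    by (induction n) (auto simp: path_def intro: order_trans[OF c])
  then have "liminf (\<lambda>n. ereal (M (pref \<omega> n))) \<le> liminf (\<lambda>n. ereal (M []))"
    by (intro Liminf_mono) (auto simp: pref_\<omega>)
  then have "ereal (indicator G \<omega>) \<le> ereal (M [])"
    using lim by (metis Liminf_const order_trans trivial_limit_sequentially)
  then show "0 \<le> ereal (M [])"
    by (metis ereal_less_eq(3) indicator_pos_le order_trans zero_ereal_def)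
qed

lemma upper_prob_mono:
  assumes "G \<subseteq> H"
  shows "upper_prob \<phi> G \<le> upper_prob \<phi> H"
  unfolding upper_prob_def
proof (rule Inf_superset_mono, clarify)
  fix M assume sm: "supermartingale \<phi> M"
    and lim: "\<forall>\<omega>. ereal (indicator H \<omega>) \<le> liminf (\<lambda>n. ereal (M (pref \<omega> n)))"
  have "ereal (indicator G \<omega>) \<le> liminf (\<lambda>n. ereal (M (pref \<omega> n)))" for \<omega>
  proof -
    have "indicator G \<omega> \<le> (indicator H \<omega> :: real)"
      using assms by (auto simp: indicator_def)
    then show ?thesis using lim by (meson ereal_less_eq(3) order.trans)
  qed
  with sm show "\<exists>M'. ereal (M []) = ereal (M' []) \<and> supermartingale \<phi> M' \<and>
      (\<forall>\<omega>. ereal (indicator G \<omega>) \<le> liminf (\<lambda>n. ereal (M' (pref \<omega> n))))"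
    by blast
qed

lemma take_pref: "m \<le> n \<Longrightarrow> take m (pref \<omega> n) = pref \<omega> m"
  unfolding pref_def by (simp add: take_map)

lemma cylset_sec_ge_subset:
  assumes "partial_cut (sec A n)"
  shows "cylset (sec_ge A n l) \<subseteq> cylset (sec A n) - cylset (sec_lt A n l)"
proof
  fix \<omega> assume "\<omega> \<in> cylset (sec_ge A n l)"
  then obtain s where s: "s \<in> sec A n" "l \<le> length s" "pref \<omega> (length s) = s"
    unfolding cylset_def sec_ge_def cyl_def by auto
  have "t = s" if t: "t \<in> sec A n" "length t < l" "pref \<omega> (length t) = t" for t
  proof -
    have "take (length t) s = t"
      using s t by (metis less_le_trans less_imp_le take_pref)
    then have "s = t @ drop (length t) s" by (metis append_take_drop_id)
    then show "t = s" using assms s(1) t(1) unfolding partial_cut_def by blast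
  qed
  with s show "\<omega> \<in> cylset (sec A n) - cylset (sec_lt A n l)"
    unfolding cylset_def sec_lt_def cyl_def by force
qed

definition split_weight :: "nat \<Rightarrow> nat \<Rightarrow> real" where
  "split_weight c n = (if n < c then (1/2) ^ (n + c) else (1/2) ^ n)"

lemma summable_split_weight: "summable (split_weight c)"
  by (rule summable_comparison_test[OF _ summable_geometric[of "1/2::real"]])
    (auto simp: split_weight_def power_add power_le_one)

lemma suminf_split_weight_le: "suminf (split_weight c) \<le> 4 * (1/2) ^ c"
proof -
  have "suminf (split_weight c) = (\<Sum>n. split_weight c (n + c)) + (\<Sum>i<c. split_weight c i)"
    by (rule suminf_split_initial_segment[OF summable_split_weight])
  also have "(\<Sum>n. split_weight c (n + c)) = (1/2) ^ c * (\<Sum>n. (1/2::real) ^ n)"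
    unfolding split_weight_def
    by (subst suminf_mult[symmetric]) (simp_all add: power_add mult.commute)
  also have "(\<Sum>i<c. split_weight c i) = (1/2) ^ c * (\<Sum>i<c. (1/2::real) ^ i)"
    unfolding split_weight_def sum_distrib_left
    by (intro sum.cong) (auto simp: power_add mult.commute)
  also have "(\<Sum>i<c. (1/2::real) ^ i) \<le> (\<Sum>i. (1/2) ^ i)"
    by (intro sum_le_suminf summable_geometric) auto
  finally show ?thesis
    by (simp add: suminf_geometric)
qed

lemma suminf_ereal_scaled_le:
  fixes c :: real
  assumes "0 \<le> c" and "summable b" and "\<And>n. 0 \<le> f n" and "\<And>n. f n \<le> ereal (b n)"
  shows "(\<Sum>n. ereal c * f n) \<le> ereal (c * suminf b)"
proof -
  have "(\<Sum>n. ereal c * f n) \<le> (\<Sum>n. ereal (c * b n))"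
  proof (rule suminf_le_pos)
    show "ereal c * f n \<le> ereal (c * b n)" for n
      using ereal_mult_left_mono[OF assms(4), of "ereal c"] assms(1) by simp
    show "0 \<le> ereal c * f n" for n
      using assms(1,3) by simp
  qed
  also have "(\<Sum>n. ereal (c * b n)) = ereal (\<Sum>n. c * b n)"
    using summable_mult[OF assms(2)] by (metis sums_ereal summable_sums sums_unique)
  finally show ?thesis by (simp add: suminf_mult[OF assms(2)])
qed

lemma upper_prob_sec_ge_schnorr_growth_le:
  assumes "partial_cut (sec A n)"
    and "upper_prob \<phi> (cylset (sec A n)) \<le> ereal ((1/2) ^ n)"
    and modulus: "\<And>N l. e N n \<le> l \<Longrightarrow>
      upper_prob \<phi> (cylset (sec A n) - cylset (sec_lt A n l)) \<le> ereal ((1/2) ^ N)"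
  shows "upper_prob \<phi> (cylset (sec_ge A n (schnorr_growth e k))) \<le> ereal (split_weight (2 * k + 2) n)"
proof (cases "n < 2 * k + 2")
  case True
  have "upper_prob \<phi> (cylset (sec_ge A n (schnorr_growth e k)))
      \<le> upper_prob \<phi> (cylset (sec A n) - cylset (sec_lt A n (schnorr_growth e k)))"
    using assms(1) by (intro upper_prob_mono cylset_sec_ge_subset)
  also have "\<dots> \<le> ereal ((1/2) ^ (n + (2 * k + 2)))"
    using True by (intro modulus schnorr_modulus_le_growth)
  finally show ?thesis using True unfolding split_weight_def by simp
next
  case False
  have "upper_prob \<phi> (cylset (sec_ge A n (schnorr_growth e k))) \<le> upper_prob \<phi> (cylset (sec A n))"
    by (rule upper_prob_mono) (auto simp: cylset_def sec_ge_def)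
  with False assms(2) show ?thesis unfolding split_weight_def by (simp add: order_trans)
qed

theorem lemma8p4:
  fixes \<phi> :: "bool list \<Rightarrow> real set" and A :: "(nat \<times> bool list) set"
  assumes "forecasting_system \<phi>" and "computable_fs \<phi>"
    and "schnorr_test \<phi> A"
    and "\<forall>n. partial_cut (sec A n)"
  shows "\<exists>\<sigma>. growth_function \<sigma> \<and>
    (\<forall>k. (\<Sum>n. ereal (2 ^ k) * upper_prob \<phi> (cylset (sec_ge A n (\<sigma> k)))) \<le> ereal ((1/2) ^ k))"
proof -
  obtain e where e: "recursive2 e" and modulus: "\<And>N n l. e N n \<le> l \<Longrightarrow>
      upper_prob \<phi> (cylset (sec A n) - cylset (sec_lt A n l)) \<le> ereal ((1/2) ^ N)"
    and level: "\<And>n. upper_prob \<phi> (cylset (sec A n)) \<le> ereal ((1/2) ^ n)"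
    using assms(3) unfolding schnorr_test_def by blast
  have "(\<Sum>n. ereal (2 ^ k) * upper_prob \<phi> (cylset (sec_ge A n (schnorr_growth e k))))
      \<le> ereal ((1/2) ^ k)" for k
  proof -
    have "(\<Sum>n. ereal (2 ^ k) * upper_prob \<phi> (cylset (sec_ge A n (schnorr_growth e k))))
        \<le> ereal (2 ^ k * suminf (split_weight (2 * k + 2)))"
      using assms(4) level modulus
      by (intro suminf_ereal_scaled_le summable_split_weight upper_prob_nonneg[OF assms(1)]
          upper_prob_sec_ge_schnorr_growth_le) auto
    also have "2 ^ k * suminf (split_weight (2 * k + 2)) \<le> (2 ^ k * (4 * (1/2) ^ (2 * k + 2)) :: real)"
      by (intro mult_left_mono suminf_split_weight_le) simp
    also have "\<dots> = (1/2) ^ k"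
      by (simp add: power_add power_mult_distrib field_simps power_mult power2_eq_square)
    finally show ?thesis by simp
  qed
  with growth_function_schnorr_growth[OF e] show ?thesis by blast
qed

end
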